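(* Let $R$ be a commutative graded ring, $P$ a homogeneous prime ideal, $S=h(R\setminus P)$ and $M$ a graded $R$-module. Then $(S^{-1}M)_0=0$ if and only if $\mathrm{Hom}_{Gr(R)}(M,E^g(R/P))=0$.
   Context: $h(R\setminus P)$ is the set of homogeneous elements of $R$ not in $P$; $S^{-1}M$ is the graded localisation and $(S^{-1}M)_0$ its degree-zero component. $Gr(R)$ is the category of graded $R$-modules with degree-preserving maps and $E^g$ the injective envelope in $Gr(R)$. *)

theory Defs
  imports "HOL-Algebra.Algebra"
begin

definition graded_decomp :: "('a, 'b) ring_scheme \<Rightarrow> (int \<Rightarrow> 'a set) \<Rightarrow> bool" where
  "graded_decomp G Gr \<longleftrightarrow>
     (\<forall>n. additive_subgroup (Gr n) G) \<and>
     (\<forall>x \<in> carrier G. \<exists>!f. (\<forall>n. f n \<in> Gr n) \<and> finite {n. f n \<noteq> \<zero>\<^bsub>G\<^esub>}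
                          \<and> x = finsum G f {n. f n \<noteq> \<zero>\<^bsub>G\<^esub>})"

definition graded_ring :: "'r ring \<Rightarrow> (int \<Rightarrow> 'r set) \<Rightarrow> bool" where
  "graded_ring R Rg \<longleftrightarrow> cring R \<and> graded_decomp R Rg \<and>
     (\<forall>i j. \<forall>a \<in> Rg i. \<forall>b \<in> Rg j. a \<otimes>\<^bsub>R\<^esub> b \<in> Rg (i + j))"

definition graded_module ::
  "'r ring \<Rightarrow> (int \<Rightarrow> 'r set) \<Rightarrow> ('r, 'm) module \<Rightarrow> (int \<Rightarrow> 'm set) \<Rightarrow> bool" where
  "graded_module R Rg M Mg \<longleftrightarrow> graded_ring R Rg \<and> module R M \<and> graded_decomp M Mg \<and>
     (\<forall>i j. \<forall>a \<in> Rg i. \<forall>x \<in> Mg j. a \<odot>\<^bsub>M\<^esub> x \<in> Mg (i + j))"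

definition homogeneous :: "(int \<Rightarrow> 'a set) \<Rightarrow> 'a \<Rightarrow> bool" where
  "homogeneous Gr x \<longleftrightarrow> (\<exists>n. x \<in> Gr n)"

definition graded_subset :: "('a, 'b) ring_scheme \<Rightarrow> (int \<Rightarrow> 'a set) \<Rightarrow> 'a set \<Rightarrow> bool" where
  "graded_subset G Gr H \<longleftrightarrow>
     (\<forall>x \<in> H. \<forall>f. (\<forall>n. f n \<in> Gr n) \<and> finite {n. f n \<noteq> \<zero>\<^bsub>G\<^esub>}
                   \<and> x = finsum G f {n. f n \<noteq> \<zero>\<^bsub>G\<^esub>} \<longrightarrow> (\<forall>n. f n \<in> H))"

definition hS :: "'r ring \<Rightarrow> (int \<Rightarrow> 'r set) \<Rightarrow> 'r set \<Rightarrow> 'r set" where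
  "hS R Rg P = {s \<in> carrier R. homogeneous Rg s \<and> s \<notin> P}"

definition loc_rel :: "'r ring \<Rightarrow> ('r, 'm) module \<Rightarrow> 'r set \<Rightarrow> (('m \<times> 'r) \<times> ('m \<times> 'r)) set" where
  "loc_rel R M S = {((m, s), (m', s')). m \<in> carrier M \<and> m' \<in> carrier M \<and> s \<in> S \<and> s' \<in> S \<and>
      (\<exists>t \<in> S. t \<odot>\<^bsub>M\<^esub> ((s' \<odot>\<^bsub>M\<^esub> m) \<ominus>\<^bsub>M\<^esub> (s \<odot>\<^bsub>M\<^esub> m')) = \<zero>\<^bsub>M\<^esub>)}"

text \<open>The fraction m/s as an element of S^{-1}M = (M x S)/~.\<close>
definition loc_class :: "'r ring \<Rightarrow> ('r, 'm) module \<Rightarrow> 'r set \<Rightarrow> 'm \<Rightarrow> 'r \<Rightarrow> ('m \<times> 'r) set" where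
  "loc_class R M S m s = loc_rel R M S `` {(m, s)}"

definition loc_deg :: "'r ring \<Rightarrow> (int \<Rightarrow> 'r set) \<Rightarrow> ('r, 'm) module \<Rightarrow> (int \<Rightarrow> 'm set)
     \<Rightarrow> 'r set \<Rightarrow> int \<Rightarrow> ('m \<times> 'r) set set" where
  "loc_deg R Rg M Mg S d =
     {loc_class R M S m s | m s n. m \<in> Mg (d + n) \<and> s \<in> S \<and> s \<in> Rg n}"

definition gr_hom :: "'r ring \<Rightarrow> ('r, 'a) module \<Rightarrow> (int \<Rightarrow> 'a set)
     \<Rightarrow> ('r, 'b) module \<Rightarrow> (int \<Rightarrow> 'b set) \<Rightarrow> ('a \<Rightarrow> 'b) \<Rightarrow> bool" where
  "gr_hom R A Ag B Bg f \<longleftrightarrow>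
     f \<in> carrier A \<rightarrow> carrier B \<and>
     (\<forall>x \<in> carrier A. \<forall>y \<in> carrier A. f (x \<oplus>\<^bsub>A\<^esub> y) = f x \<oplus>\<^bsub>B\<^esub> f y) \<and>
     (\<forall>r \<in> carrier R. \<forall>x \<in> carrier A. f (r \<odot>\<^bsub>A\<^esub> x) = r \<odot>\<^bsub>B\<^esub> f x) \<and>
     (\<forall>n. f ` Ag n \<subseteq> Bg n)"

text \<open>Injective objects of Gr(R). HOL cannot quantify over all types inside a formula,
  so the test modules range over all graded R-modules whose carrier lives in the type 'x.\<close>
definition gr_injective :: "'x itself \<Rightarrow> 'r ring \<Rightarrow> (int \<Rightarrow> 'r set)
     \<Rightarrow> ('r, 'e) module \<Rightarrow> (int \<Rightarrow> 'e set) \<Rightarrow> bool" where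
  "gr_injective T R Rg E Eg \<longleftrightarrow> graded_module R Rg E Eg \<and>
     (\<forall>(A :: ('r, 'x) module) Ag (B :: ('r, 'x) module) Bg u g.
        graded_module R Rg A Ag \<and> graded_module R Rg B Bg \<and>
        gr_hom R A Ag B Bg u \<and> inj_on u (carrier A) \<and> gr_hom R A Ag E Eg g \<longrightarrow>
        (\<exists>h. gr_hom R B Bg E Eg h \<and> (\<forall>x \<in> carrier A. h (u x) = g x)))"

definition gr_essential :: "'r ring \<Rightarrow> ('r, 'e) module \<Rightarrow> (int \<Rightarrow> 'e set) \<Rightarrow> 'e set \<Rightarrow> bool" where
  "gr_essential R E Eg N \<longleftrightarrow>
     (\<forall>H. submodule H R E \<and> graded_subset E Eg H \<and> H \<inter> N = {\<zero>\<^bsub>E\<^esub>} \<longrightarrow> H = {\<zero>\<^bsub>E\<^esub>})"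

definition gr_injective_envelope :: "'x itself \<Rightarrow> 'r ring \<Rightarrow> (int \<Rightarrow> 'r set)
     \<Rightarrow> ('r, 'q) module \<Rightarrow> (int \<Rightarrow> 'q set) \<Rightarrow> ('r, 'e) module \<Rightarrow> (int \<Rightarrow> 'e set)
     \<Rightarrow> ('q \<Rightarrow> 'e) \<Rightarrow> bool" where
  "gr_injective_envelope T R Rg Q Qg E Eg i \<longleftrightarrow>
     gr_hom R Q Qg E Eg i \<and> inj_on i (carrier Q) \<and> gr_injective T R Rg E Eg \<and>
     gr_essential R E Eg (i ` carrier Q)"

definition quot_module :: "'r ring \<Rightarrow> 'r set \<Rightarrow> ('r, 'r set) module" where
  "quot_module R I =
     \<lparr>partial_object.carrier = carrier (R Quot I), Group.monoid.mult = rcoset_mult R I, Group.monoid.one = a_r_coset R I \<one>\<^bsub>R\<^esub>,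
      Ring.ring.zero = I, Ring.ring.add = set_add R, Module.module.smult = (\<lambda>a Y. rcoset_mult R I (a_r_coset R I a) Y)\<rparr>"

definition quot_grading :: "'r ring \<Rightarrow> (int \<Rightarrow> 'r set) \<Rightarrow> 'r set \<Rightarrow> int \<Rightarrow> 'r set set" where
  "quot_grading R Rg I n = {a_r_coset R I r | r. r \<in> Rg n}"

end

theory Submission
  imports Defs
begin

text \<open>
  Let \<open>\<phi> : R \<rightarrow> E\<close> be the composite of \<open>R \<rightarrow> R/P\<close> with the embedding of \<open>R/P\<close> into its
  envelope, so that \<open>\<phi> a = 0\<close> iff \<open>a \<in> P\<close>. The degree-zero part of \<open>S\<^sup>-\<^sup>1M\<close> vanishes iff
  every \<open>m \<in> M\<^sub>n\<close> for which \<open>S\<close> meets \<open>R\<^sub>n\<close> is killed by an element of \<open>S\<close>.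

  If such an \<open>m\<close> is killed by no element of \<open>S\<close>, comparing homogeneous components shows
  that its annihilator lies in \<open>P\<close>; so for \<open>s \<in> S \<inter> R\<^sub>n\<close> the map \<open>r m \<mapsto> \<phi> (r s)\<close> is a
  well-defined graded map on \<open>R m\<close>, which extends to \<open>M\<close> by injectivity of \<open>E\<close> and does not
  vanish at \<open>m\<close>.

  Conversely, let \<open>f : M \<rightarrow> E\<close> be graded and \<open>w \<in> M\<^sub>j\<close> with \<open>f w \<noteq> 0\<close>. Since \<open>\<phi> R\<close> is
  essential and \<open>R f w\<close> is graded, some homogeneous multiple \<open>b f w\<close> equals \<open>\<phi> a\<close> with
  \<open>a \<in> R\<^sub>k\<close> outside \<open>P\<close>. Then \<open>b w / a\<close> has degree zero, so \<open>t b w = 0\<close> for some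
  \<open>t \<in> S\<close>, whence \<open>\<phi> (t a) = f (t b w) = 0\<close> and \<open>t a \<in> P\<close>, contradicting primality.
\<close>

section \<open>Homogeneous components\<close>

lemma (in abelian_group_hom) hom_finsum:
  assumes "finite F"
  shows "f \<in> F \<rightarrow> carrier G \<Longrightarrow> h (finsum G f F) = finsum H (\<lambda>j. h (f j)) F"
  using assms by (induction F) (auto simp: Pi_def)

definition homogeneous_component :: "('a, 'b) ring_scheme \<Rightarrow> (int \<Rightarrow> 'a set) \<Rightarrow> 'a \<Rightarrow> int \<Rightarrow> 'a"
  where "homogeneous_component G Gr x = (THE f. (\<forall>n. f n \<in> Gr n) \<and> finite {n. f n \<noteq> \<zero>\<^bsub>G\<^esub>}
     \<and> x = finsum G f {n. f n \<noteq> \<zero>\<^bsub>G\<^esub>})"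

locale graded_abelian_group = abelian_group G for G (structure) +
  fixes Gr :: "int \<Rightarrow> 'a set"
  assumes graded_decomp: "graded_decomp G Gr"
begin

lemma additive_subgroup_grade: "additive_subgroup (Gr n) G"
  using graded_decomp unfolding graded_decomp_def by blast

lemma grade_subset: "Gr n \<subseteq> carrier G"
  using additive_subgroup.a_subset[OF additive_subgroup_grade] .

lemma grade_closed: "x \<in> Gr n \<Longrightarrow> x \<in> carrier G"
  using grade_subset by blast

lemma zero_in_grade: "\<zero> \<in> Gr n"
  using additive_subgroup.zero_closed[OF additive_subgroup_grade] .

lemma homogeneous_decomposition_unique:
  assumes "finite F" and f: "\<And>n. f n \<in> Gr n" and g: "\<And>n. g n \<in> Gr n"
    and "\<And>n. n \<notin> F \<Longrightarrow> f n = \<zero>" and "\<And>n. n \<notin> F \<Longrightarrow> g n = \<zero>"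
    and eq: "finsum G f F = finsum G g F"
  shows "f = g"
proof -
  have fc: "f n \<in> carrier G" and gc: "g n \<in> carrier G" for n
    using f g grade_subset by blast+
  have support: "{n. f n \<noteq> \<zero>} \<subseteq> F" "{n. g n \<noteq> \<zero>} \<subseteq> F"
    using assms(4,5) by blast+
  have "finsum G f F = finsum G f {n. f n \<noteq> \<zero>}" "finsum G g F = finsum G g {n. g n \<noteq> \<zero>}"
    using support fc gc \<open>finite F\<close>
    by (auto intro!: add.finprod_mono_neutral_cong_right)
  moreover have "finite {n. f n \<noteq> \<zero>}" "finite {n. g n \<noteq> \<zero>}"
    using support \<open>finite F\<close> finite_subset by blast+
  moreover have "finsum G f F \<in> carrier G"
    using fc by simp
  ultimately show ?thesis
    using graded_decomp f g eq unfolding graded_decomp_def by metis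
qed

lemma homogeneous_component_decomposition:
  assumes "x \<in> carrier G"
  shows "\<forall>n. homogeneous_component G Gr x n \<in> Gr n"
    and "finite {n. homogeneous_component G Gr x n \<noteq> \<zero>}"
    and "finsum G (homogeneous_component G Gr x) {n. homogeneous_component G Gr x n \<noteq> \<zero>} = x"
proof -
  have "\<exists>!f. (\<forall>n. f n \<in> Gr n) \<and> finite {n. f n \<noteq> \<zero>} \<and> x = finsum G f {n. f n \<noteq> \<zero>}"
    using graded_decomp assms unfolding graded_decomp_def by blast
  from theI'[OF this] show "\<forall>n. homogeneous_component G Gr x n \<in> Gr n"
    "finite {n. homogeneous_component G Gr x n \<noteq> \<zero>}"
    "finsum G (homogeneous_component G Gr x) {n. homogeneous_component G Gr x n \<noteq> \<zero>} = x"
    unfolding homogeneous_component_def by auto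
qed

lemma homogeneous_component_in_grade: "x \<in> carrier G \<Longrightarrow> homogeneous_component G Gr x n \<in> Gr n"
  using homogeneous_component_decomposition(1) by blast

lemma homogeneous_component_closed: "x \<in> carrier G \<Longrightarrow> homogeneous_component G Gr x n \<in> carrier G"
  using homogeneous_component_in_grade grade_subset by blast

lemma homogeneous_component_sum:
  assumes x: "x \<in> carrier G" and "finite F"
    and support: "\<And>n. n \<notin> F \<Longrightarrow> homogeneous_component G Gr x n = \<zero>"
  shows "finsum G (homogeneous_component G Gr x) F = x"
proof -
  have "finsum G (homogeneous_component G Gr x) F
      = finsum G (homogeneous_component G Gr x) {n. homogeneous_component G Gr x n \<noteq> \<zero>}"
    using support \<open>finite F\<close> homogeneous_component_closed[OF x]
    by (intro add.finprod_mono_neutral_cong_right) auto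
  then show ?thesis
    using homogeneous_component_decomposition(3)[OF x] by simp
qed

lemma homogeneous_componentI:
  assumes "finite F" and f: "\<And>n. f n \<in> Gr n" and support: "\<And>n. n \<notin> F \<Longrightarrow> f n = \<zero>"
    and x: "x = finsum G f F"
  shows "homogeneous_component G Gr x = f"
proof -
  have fc: "f \<in> F \<rightarrow> carrier G"
    using f grade_subset by blast
  then have xc: "x \<in> carrier G"
    using x by simp
  define F' where "F' = F \<union> {n. homogeneous_component G Gr x n \<noteq> \<zero>}"
  have "finite F'"
    using \<open>finite F\<close> homogeneous_component_decomposition(2)[OF xc] by (simp add: F'_def)
  moreover have "finsum G f F' = finsum G f F"
    using \<open>finite F'\<close> support f grade_subset
    by (intro add.finprod_mono_neutral_cong_right) (auto simp: F'_def)
  moreover have "finsum G (homogeneous_component G Gr x) F' = x"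
    using \<open>finite F'\<close> by (intro homogeneous_component_sum[OF xc]) (auto simp: F'_def)
  ultimately show ?thesis
    using homogeneous_component_in_grade[OF xc] f support x
    by (intro homogeneous_decomposition_unique[of F']) (auto simp: F'_def)
qed

lemma homogeneous_component_of_homogeneous:
  assumes "x \<in> Gr k"
  shows "homogeneous_component G Gr x n = (if n = k then x else \<zero>)"
proof -
  have "homogeneous_component G Gr x = (\<lambda>n. if n = k then x else \<zero>)"
    using assms zero_in_grade by (intro homogeneous_componentI[of "{k}"]) (auto simp: grade_closed)
  then show ?thesis by simp
qed

lemma ex_homogeneous_component_nonzero:
  assumes "x \<in> carrier G" and "x \<noteq> \<zero>"
  obtains n where "homogeneous_component G Gr x n \<noteq> \<zero>"
  using assms homogeneous_component_decomposition(3)[OF assms(1)] add.finprod_one_eqI by metis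

lemma finsum_in_additive_subgroup:
  assumes "additive_subgroup H G" and "finite F"
  shows "f \<in> F \<rightarrow> H \<Longrightarrow> finsum G f F \<in> H"
  using \<open>finite F\<close>
proof (induction F)
  case empty
  then show ?case using additive_subgroup.zero_closed[OF assms(1)] by simp
next
  case (insert a F)
  moreover have "f \<in> insert a F \<rightarrow> carrier G"
    using insert.prems additive_subgroup.a_subset[OF assms(1)] by blast
  ultimately show ?case
    using additive_subgroup.a_closed[OF assms(1)] by simp
qed

lemma mem_additive_subgroup_if_homogeneous_components:
  assumes "additive_subgroup H G" and x: "x \<in> carrier G"
    and "\<And>n. homogeneous_component G Gr x n \<in> H"
  shows "x \<in> H"
  using finsum_in_additive_subgroup[OF assms(1) homogeneous_component_decomposition(2)[OF x]]
    homogeneous_component_decomposition(3)[OF x] assms(3) by (metis Pi_I)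

lemma homogeneous_component_finsum_shifted:
  assumes "finite F" and f: "\<And>j. j \<in> F \<Longrightarrow> f j \<in> Gr (j + d)"
  shows "homogeneous_component G Gr (finsum G f F) n = (if n - d \<in> F then f (n - d) else \<zero>)"
proof -
  define g where "g n = (if n - d \<in> F then f (n - d) else \<zero>)" for n
  have fc: "f \<in> F \<rightarrow> carrier G"
    using f grade_closed by blast
  have "finsum G f F = finsum G (\<lambda>j. g (j + d)) F"
    using fc by (intro add.finprod_cong') (auto simp: g_def)
  also have "\<dots> = finsum G g ((\<lambda>j. j + d) ` F)"
    using fc by (intro finsum_reindex[symmetric]) (auto simp: g_def inj_on_def)
  finally have sum_eq: "finsum G f F = finsum G g ((\<lambda>j. j + d) ` F)" .
  have "homogeneous_component G Gr (finsum G f F) = g"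
  proof (rule homogeneous_componentI[OF _ _ _ sum_eq])
    show "g n \<in> Gr n" for n
      using f[of "n - d"] zero_in_grade by (simp add: g_def)
    show "g n = \<zero>" if "n \<notin> (\<lambda>j. j + d) ` F" for n
      using that by (auto simp: g_def image_iff intro!: bexI[of _ "n - d"])
  qed (use \<open>finite F\<close> in simp)
  then show ?thesis by (simp add: g_def)
qed

lemma graded_subset_iff_homogeneous_components:
  assumes "H \<subseteq> carrier G"
  shows "graded_subset G Gr H \<longleftrightarrow> (\<forall>x \<in> H. \<forall>n. homogeneous_component G Gr x n \<in> H)"
proof
  assume graded: "graded_subset G Gr H"
  show "\<forall>x \<in> H. \<forall>n. homogeneous_component G Gr x n \<in> H"
  proof (intro ballI allI)
    fix x n
    assume "x \<in> H"
    then have "x \<in> carrier G"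
      using assms by blast
    with graded \<open>x \<in> H\<close> show "homogeneous_component G Gr x n \<in> H"
      using homogeneous_component_decomposition unfolding graded_subset_def by metis
  qed
next
  assume components: "\<forall>x \<in> H. \<forall>n. homogeneous_component G Gr x n \<in> H"
  show "graded_subset G Gr H"
    unfolding graded_subset_def
  proof (intro ballI allI impI)
    fix x f n
    assume "x \<in> H" and f: "(\<forall>n. f n \<in> Gr n) \<and> finite {n. f n \<noteq> \<zero>} \<and> x = finsum G f {n. f n \<noteq> \<zero>}"
    then have "homogeneous_component G Gr x = f"
      by (intro homogeneous_componentI[of "{n. f n \<noteq> \<zero>}"]) auto
    then show "f n \<in> H"
      using components \<open>x \<in> H\<close> by blast
  qed
qed

end

lemma homogeneous_component_hom:
  assumes "graded_abelian_group G Gr" and "graded_abelian_group H Hr" and "abelian_group_hom G H h"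
    and deg: "\<And>n. h ` Gr n \<subseteq> Hr n" and x: "x \<in> carrier G"
  shows "h (homogeneous_component G Gr x n) = homogeneous_component H Hr (h x) n"
proof -
  interpret G: graded_abelian_group G Gr by fact
  interpret H: graded_abelian_group H Hr by fact
  interpret abelian_group_hom G H h by fact
  define F where "F = {n. homogeneous_component G Gr x n \<noteq> \<zero>\<^bsub>G\<^esub>}"
  have "finite F"
    using G.homogeneous_component_decomposition(2)[OF x] by (simp add: F_def)
  have "h x = h (finsum G (homogeneous_component G Gr x) F)"
    using G.homogeneous_component_decomposition(3)[OF x] by (simp add: F_def)
  also have "\<dots> = finsum H (\<lambda>n. h (homogeneous_component G Gr x n)) F"
    using \<open>finite F\<close> G.homogeneous_component_closed[OF x] by (simp add: hom_finsum Pi_def)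
  finally have "homogeneous_component H Hr (h x) = (\<lambda>n. h (homogeneous_component G Gr x n))"
    using \<open>finite F\<close> deg G.homogeneous_component_in_grade[OF x]
    by (intro H.homogeneous_componentI) (auto simp: F_def)
  then show ?thesis by simp
qed

section \<open>Graded rings and modules\<close>

lemma graded_ring_graded_abelian_group:
  assumes "graded_ring R Rg"
  shows "graded_abelian_group R Rg"
proof -
  interpret cring R
    using assms by (simp add: graded_ring_def)
  show ?thesis
    using assms by unfold_locales (simp add: graded_ring_def)
qed

lemma graded_module_graded_abelian_group:
  assumes "graded_module R Rg M Mg"
  shows "graded_abelian_group M Mg"
proof -
  interpret module R M
    using assms by (simp add: graded_module_def)
  show ?thesis
    using assms by unfold_locales (simp add: graded_module_def)
qed

lemma graded_ring_mult_homogeneous: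
  "graded_ring R Rg \<Longrightarrow> a \<in> Rg i \<Longrightarrow> b \<in> Rg j \<Longrightarrow> a \<otimes>\<^bsub>R\<^esub> b \<in> Rg (i + j)"
  by (simp add: graded_ring_def)

lemma graded_module_smult_homogeneous:
  "graded_module R Rg M Mg \<Longrightarrow> a \<in> Rg i \<Longrightarrow> x \<in> Mg j \<Longrightarrow> a \<odot>\<^bsub>M\<^esub> x \<in> Mg (i + j)"
  by (simp add: graded_module_def)

lemma graded_ring_homogeneous_component_mult:
  fixes R (structure)
  assumes gr: "graded_ring R Rg" and a: "a \<in> carrier R" and x: "x \<in> Rg k"
  shows "homogeneous_component R Rg (a \<otimes> x) n = homogeneous_component R Rg a (n - k) \<otimes> x"
proof -
  interpret cring R
    using gr by (simp add: graded_ring_def)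
  interpret G: graded_abelian_group R Rg
    using graded_ring_graded_abelian_group[OF gr] .
  define F where "F = {j. homogeneous_component R Rg a j \<noteq> \<zero>}"
  have "finite F"
    using G.homogeneous_component_decomposition(2)[OF a] by (simp add: F_def)
  have xc: "x \<in> carrier R"
    using G.grade_closed[OF x] .
  have "a \<otimes> x = finsum R (homogeneous_component R Rg a) F \<otimes> x"
    using G.homogeneous_component_decomposition(3)[OF a] by (simp add: F_def)
  also have "\<dots> = finsum R (\<lambda>j. homogeneous_component R Rg a j \<otimes> x) F"
    using \<open>finite F\<close> xc G.homogeneous_component_closed[OF a] by (simp add: finsum_ldistr Pi_def)
  finally have "homogeneous_component R Rg (a \<otimes> x) n
      = (if n - k \<in> F then homogeneous_component R Rg a (n - k) \<otimes> x else \<zero>)"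
    using graded_ring_mult_homogeneous[OF gr G.homogeneous_component_in_grade[OF a] x]
    by (simp add: G.homogeneous_component_finsum_shifted[OF \<open>finite F\<close>, of _ k])
  then show ?thesis
    using xc by (simp add: F_def)
qed

lemma (in module) finsum_smult_rdistr:
  assumes "finite F"
  shows "f \<in> F \<rightarrow> carrier R \<Longrightarrow> x \<in> carrier M \<Longrightarrow> finsum R f F \<odot>\<^bsub>M\<^esub> x = finsum M (\<lambda>j. f j \<odot>\<^bsub>M\<^esub> x) F"
  using assms by (induction F) (simp_all add: Pi_def smult_l_distr)

lemma graded_module_homogeneous_component_smult:
  assumes gm: "graded_module R Rg M Mg" and a: "a \<in> carrier R" and x: "x \<in> Mg k"
  shows "homogeneous_component M Mg (a \<odot>\<^bsub>M\<^esub> x) n = homogeneous_component R Rg a (n - k) \<odot>\<^bsub>M\<^esub> x"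
proof -
  interpret module R M
    using gm by (simp add: graded_module_def)
  interpret G: graded_abelian_group R Rg
    using graded_ring_graded_abelian_group gm unfolding graded_module_def by blast
  interpret GM: graded_abelian_group M Mg
    using graded_module_graded_abelian_group[OF gm] .
  define F where "F = {j. homogeneous_component R Rg a j \<noteq> \<zero>\<^bsub>R\<^esub>}"
  have "finite F"
    using G.homogeneous_component_decomposition(2)[OF a] by (simp add: F_def)
  have xc: "x \<in> carrier M"
    using GM.grade_closed[OF x] .
  have "a \<odot>\<^bsub>M\<^esub> x = finsum R (homogeneous_component R Rg a) F \<odot>\<^bsub>M\<^esub> x"
    using G.homogeneous_component_decomposition(3)[OF a] by (simp add: F_def)
  also have "\<dots> = finsum M (\<lambda>j. homogeneous_component R Rg a j \<odot>\<^bsub>M\<^esub> x) F"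
    using \<open>finite F\<close> xc G.homogeneous_component_closed[OF a] by (simp add: finsum_smult_rdistr Pi_def)
  finally have "homogeneous_component M Mg (a \<odot>\<^bsub>M\<^esub> x) n
      = (if n - k \<in> F then homogeneous_component R Rg a (n - k) \<odot>\<^bsub>M\<^esub> x else \<zero>\<^bsub>M\<^esub>)"
    using graded_module_smult_homogeneous[OF gm G.homogeneous_component_in_grade[OF a] x]
    by (simp add: GM.homogeneous_component_finsum_shifted[OF \<open>finite F\<close>, of _ k])
  then show ?thesis
    using xc by (simp add: F_def)
qed

lemma graded_ring_one_homogeneous:
  fixes R (structure)
  assumes gr: "graded_ring R Rg"
  shows "\<one> \<in> Rg 0"
proof -
  interpret cring R
    using gr by (simp add: graded_ring_def)
  interpret G: graded_abelian_group R Rg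
    using graded_ring_graded_abelian_group[OF gr] .
  define e where "e = homogeneous_component R Rg \<one>"
  have e: "e j \<in> Rg j" and ec: "e j \<in> carrier R" for j
    using G.homogeneous_component_in_grade G.homogeneous_component_closed by (simp_all add: e_def)
  \<comment> \<open>Comparing components of \<open>\<one> \<otimes> x = x\<close> for homogeneous \<open>x\<close>.\<close>
  have e_mult: "e (n - k) \<otimes> x = (if n = k then x else \<zero>)" if "x \<in> Rg k" for x n k
    using graded_ring_homogeneous_component_mult[OF gr one_closed that, of n]
      G.homogeneous_component_of_homogeneous[OF that] G.grade_closed[OF that]
    by (simp add: e_def)
  have "e j = \<zero>" if "j \<noteq> 0" for j
  proof -
    have "e j = e 0 \<otimes> e j"
      using e_mult[OF e, of j j] by simp
    also have "\<dots> = e j \<otimes> e 0"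
      using ec m_comm by blast
    also have "\<dots> = \<zero>"
      using e_mult[OF e, of j 0] that by simp
    finally show ?thesis .
  qed
  then have "\<one> = finsum R e {0}"
    using G.homogeneous_component_sum[OF one_closed, of "{0}"] by (simp add: e_def)
  then show ?thesis
    using e[of 0] ec by simp
qed

lemma gr_homD:
  assumes "gr_hom R A Ag B Bg f"
  shows gr_hom_closed: "x \<in> carrier A \<Longrightarrow> f x \<in> carrier B"
    and gr_hom_add: "x \<in> carrier A \<Longrightarrow> y \<in> carrier A \<Longrightarrow> f (x \<oplus>\<^bsub>A\<^esub> y) = f x \<oplus>\<^bsub>B\<^esub> f y"
    and gr_hom_smult: "r \<in> carrier R \<Longrightarrow> x \<in> carrier A \<Longrightarrow> f (r \<odot>\<^bsub>A\<^esub> x) = r \<odot>\<^bsub>B\<^esub> f x"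
    and gr_hom_grade: "x \<in> Ag n \<Longrightarrow> f x \<in> Bg n"
  using assms unfolding gr_hom_def by blast+

lemma gr_hom_abelian_group_hom:
  assumes "module R A" and "module R B" and f: "gr_hom R A Ag B Bg f"
  shows "abelian_group_hom A B f"
proof (rule abelian_group_homI)
  show "abelian_group A" "abelian_group B"
    using assms(1,2) by (simp_all add: module_def)
  then show "group_hom (add_monoid A) (add_monoid B) f"
    using gr_homD[OF f] unfolding group_hom_def group_hom_axioms_def hom_def
    by (auto simp: abelian_group.a_group)
qed

lemma gr_hom_homogeneous_component:
  assumes "graded_module R Rg A Ag" and "graded_module R Rg B Bg" and f: "gr_hom R A Ag B Bg f"
    and "x \<in> carrier A"
  shows "f (homogeneous_component A Ag x n) = homogeneous_component B Bg (f x) n"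
  using assms gr_hom_grade[OF f]
  by (intro homogeneous_component_hom graded_module_graded_abelian_group gr_hom_abelian_group_hom)
    (auto simp: graded_module_def)

lemma finsum_submodule:
  assumes "module R M" and "submodule H R M" and "finite F" and "f \<in> F \<rightarrow> H"
  shows "finsum (M\<lparr>carrier := H\<rparr>) f F = finsum M f F"
proof -
  interpret M: module R M by fact
  interpret H: module R "M\<lparr>carrier := H\<rparr>"
    using submodule.submodule_is_module assms by blast
  have H: "H \<subseteq> carrier M"
    using M.submoduleE(1) assms(2) .
  from assms(3,4) show ?thesis
  proof (induction F)
    case (insert a F)
    then have "f \<in> F \<rightarrow> carrier M" "f a \<in> carrier M"
      using H by auto
    with insert show ?case
      by (simp add: M.finsum_insert)
  qed simp
qed

lemma graded_submodule_graded_module: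
  fixes M (structure)
  assumes gm: "graded_module R Rg M Mg" and sub: "submodule H R M" and graded: "graded_subset M Mg H"
  shows "graded_module R Rg (M\<lparr>carrier := H\<rparr>) (\<lambda>n. H \<inter> Mg n)"
proof -
  interpret module R M
    using gm by (simp add: graded_module_def)
  interpret G: graded_abelian_group M Mg
    using graded_module_graded_abelian_group[OF gm] .
  let ?N = "M\<lparr>carrier := H\<rparr>"
  have H: "H \<subseteq> carrier M"
    using submoduleE(1)[OF sub] .
  have components: "homogeneous_component M Mg y n \<in> H" if "y \<in> H" for y n
    using graded that G.graded_subset_iff_homogeneous_components[OF H] by blast
  have "additive_subgroup (H \<inter> Mg n) ?N" for n
  proof -
    have "subgroup H (add_monoid M)" "subgroup (Mg n) (add_monoid M)"
      using submodule.axioms(1)[OF sub] additive_subgroup.a_subgroup[OF G.additive_subgroup_grade]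
      by auto
    then have "subgroup (H \<inter> Mg n) ((add_monoid M)\<lparr>carrier := H\<rparr>)"
      by (intro add.subgroup_incl add.subgroups_Inter_pair) auto
    then show ?thesis
      by (intro additive_subgroupI) simp
  qed
  moreover have "\<exists>!f. (\<forall>n. f n \<in> H \<inter> Mg n) \<and> finite {n. f n \<noteq> \<zero>}
      \<and> y = finsum ?N f {n. f n \<noteq> \<zero>}" if y: "y \<in> H" for y
  proof (rule ex1I)
    have yc: "y \<in> carrier M"
      using y H by blast
    have "finsum ?N (homogeneous_component M Mg y) {n. homogeneous_component M Mg y n \<noteq> \<zero>} = y"
      using G.homogeneous_component_decomposition[OF yc] components[OF y]
      by (subst finsum_submodule[OF module_axioms sub]) auto
    then show "(\<forall>n. homogeneous_component M Mg y n \<in> H \<inter> Mg n)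
        \<and> finite {n. homogeneous_component M Mg y n \<noteq> \<zero>}
        \<and> y = finsum ?N (homogeneous_component M Mg y) {n. homogeneous_component M Mg y n \<noteq> \<zero>}"
      using G.homogeneous_component_decomposition[OF yc] components[OF y] by simp
    fix f
    assume f: "(\<forall>n. f n \<in> H \<inter> Mg n) \<and> finite {n. f n \<noteq> \<zero>} \<and> y = finsum ?N f {n. f n \<noteq> \<zero>}"
    then have "y = finsum M f {n. f n \<noteq> \<zero>}"
      using finsum_submodule[OF module_axioms sub] by auto
    then show "f = homogeneous_component M Mg y"
      using f by (intro G.homogeneous_componentI[symmetric]) auto
  qed
  moreover have "a \<odot> x \<in> H \<inter> Mg (i + j)" if "a \<in> Rg i" "x \<in> H \<inter> Mg j" for a x i j
  proof -
    have "a \<in> carrier R"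
      using gm that(1) graded_ring_graded_abelian_group[THEN graded_abelian_group.grade_closed]
      by (auto simp: graded_module_def)
    then show ?thesis
      using that graded_module_smult_homogeneous[OF gm] submodule.smult_closed[OF sub] by blast
  qed
  ultimately show ?thesis
    using gm submodule.submodule_is_module[OF sub module_axioms]
    unfolding graded_module_def graded_decomp_def by auto
qed

section \<open>Cyclic submodules\<close>

definition cyclic_submodule :: "('r, 'c) ring_scheme \<Rightarrow> ('r, 'm, 'd) module_scheme \<Rightarrow> 'm \<Rightarrow> 'm set"
  where "cyclic_submodule R M m = {a \<odot>\<^bsub>M\<^esub> m | a. a \<in> carrier R}"

lemma (in module) submodule_cyclic_submodule:
  assumes m: "m \<in> carrier M"
  shows "submodule (cyclic_submodule R M m) R M"
proof (rule submoduleI)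
  show "cyclic_submodule R M m \<subseteq> carrier M"
    using m by (auto simp: cyclic_submodule_def)
  show "\<zero>\<^bsub>M\<^esub> \<in> cyclic_submodule R M m"
    using m by (auto simp: cyclic_submodule_def intro!: exI[of _ "\<zero>"])
  show "\<ominus>\<^bsub>M\<^esub> x \<in> cyclic_submodule R M m" if "x \<in> cyclic_submodule R M m" for x
    using that m by (auto simp: cyclic_submodule_def smult_l_minus[symmetric])
  show "x \<oplus>\<^bsub>M\<^esub> y \<in> cyclic_submodule R M m"
    if "x \<in> cyclic_submodule R M m" "y \<in> cyclic_submodule R M m" for x y
    using that m by (auto simp: cyclic_submodule_def smult_l_distr[symmetric])
  show "a \<odot>\<^bsub>M\<^esub> x \<in> cyclic_submodule R M m" if "a \<in> carrier R" "x \<in> cyclic_submodule R M m" for a x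
    using that m by (auto simp: cyclic_submodule_def smult_assoc1[symmetric])
qed

lemma graded_subset_cyclic_submodule:
  assumes gm: "graded_module R Rg M Mg" and m: "m \<in> Mg k"
  shows "graded_subset M Mg (cyclic_submodule R M m)"
proof -
  interpret module R M
    using gm by (simp add: graded_module_def)
  interpret G: graded_abelian_group M Mg
    using graded_module_graded_abelian_group[OF gm] .
  interpret RG: graded_abelian_group R Rg
    using graded_ring_graded_abelian_group gm unfolding graded_module_def by blast
  have "homogeneous_component M Mg (a \<odot>\<^bsub>M\<^esub> m) n \<in> cyclic_submodule R M m"
    if "a \<in> carrier R" for a n
    using graded_module_homogeneous_component_smult[OF gm that m] RG.homogeneous_component_closed[OF that]
    by (auto simp: cyclic_submodule_def)
  then show ?thesis
    using submoduleE(1)[OF submodule_cyclic_submodule[OF G.grade_closed[OF m]]]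
    by (auto simp: G.graded_subset_iff_homogeneous_components cyclic_submodule_def)
qed

lemma homogeneous_in_cyclic_submodule:
  assumes gm: "graded_module R Rg M Mg" and m: "m \<in> Mg k"
    and y: "y \<in> cyclic_submodule R M m" "y \<in> Mg n"
  obtains b where "b \<in> Rg (n - k)" and "y = b \<odot>\<^bsub>M\<^esub> m"
proof -
  interpret G: graded_abelian_group M Mg
    using graded_module_graded_abelian_group[OF gm] .
  interpret RG: graded_abelian_group R Rg
    using graded_ring_graded_abelian_group gm unfolding graded_module_def by blast
  obtain a where a: "a \<in> carrier R" and "y = a \<odot>\<^bsub>M\<^esub> m"
    using y(1) by (auto simp: cyclic_submodule_def)
  then have "y = homogeneous_component R Rg a (n - k) \<odot>\<^bsub>M\<^esub> m"
    using graded_module_homogeneous_component_smult[OF gm a m, of n]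
      G.homogeneous_component_of_homogeneous[OF y(2)] by simp
  then show ?thesis
    using that RG.homogeneous_component_in_grade[OF a] by blast
qed

section \<open>Graded localisation at a homogeneous prime\<close>

lemma submonoid_hS:
  fixes R (structure)
  assumes gr: "graded_ring R Rg" and "primeideal P R"
  shows "submonoid (hS R Rg P) R"
proof -
  interpret primeideal P R by fact
  show ?thesis
  proof
    show "hS R Rg P \<subseteq> carrier R"
      by (auto simp: hS_def)
    show "\<one> \<in> hS R Rg P"
      using graded_ring_one_homogeneous[OF gr] I_notcarr one_imp_carrier
      by (auto simp: hS_def homogeneous_def)
    show "s \<otimes> t \<in> hS R Rg P" if "s \<in> hS R Rg P" "t \<in> hS R Rg P" for s t
      using that I_prime graded_ring_mult_homogeneous[OF gr]
      by (simp add: hS_def homogeneous_def) blast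
  qed
qed

lemma annihilator_of_homogeneous_subset_prime:
  assumes gm: "graded_module R Rg M Mg" and "primeideal P R" and m: "m \<in> Mg n"
    and not_torsion: "\<And>t. t \<in> hS R Rg P \<Longrightarrow> t \<odot>\<^bsub>M\<^esub> m \<noteq> \<zero>\<^bsub>M\<^esub>"
    and a: "a \<in> carrier R" and am: "a \<odot>\<^bsub>M\<^esub> m = \<zero>\<^bsub>M\<^esub>"
  shows "a \<in> P"
proof -
  interpret primeideal P R by fact
  interpret G: graded_abelian_group M Mg
    using graded_module_graded_abelian_group[OF gm] .
  interpret RG: graded_abelian_group R Rg
    using graded_ring_graded_abelian_group gm unfolding graded_module_def by blast
  \<comment> \<open>Each homogeneous component of \<open>a\<close> kills \<open>m\<close>, since the components of \<open>a \<odot> m\<close> are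
    the products of those of \<open>a\<close> with \<open>m\<close>.\<close>
  have "homogeneous_component R Rg a j \<odot>\<^bsub>M\<^esub> m = \<zero>\<^bsub>M\<^esub>" for j
    using graded_module_homogeneous_component_smult[OF gm a m, of "j + n"]
      G.homogeneous_component_of_homogeneous[OF G.zero_in_grade] am by simp
  then have "homogeneous_component R Rg a j \<notin> hS R Rg P" for j
    using not_torsion by blast
  then have "homogeneous_component R Rg a j \<in> P" for j
    using RG.homogeneous_component_in_grade[OF a] RG.homogeneous_component_closed[OF a]
    by (auto simp: hS_def homogeneous_def)
  then show ?thesis
    using RG.mem_additive_subgroup_if_homogeneous_components[OF is_additive_subgroup a] by blast
qed

lemma mem_loc_class_iff:
  "(m', s') \<in> loc_class R M S m s \<longleftrightarrow> m \<in> carrier M \<and> m' \<in> carrier M \<and> s \<in> S \<and> s' \<in> S \<and>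
     (\<exists>t \<in> S. t \<odot>\<^bsub>M\<^esub> ((s' \<odot>\<^bsub>M\<^esub> m) \<ominus>\<^bsub>M\<^esub> (s \<odot>\<^bsub>M\<^esub> m')) = \<zero>\<^bsub>M\<^esub>)"
  by (simp add: loc_class_def loc_rel_def)

lemma (in module) smult_minus_smult:
  assumes "t \<in> carrier R" "a \<in> carrier R" "b \<in> carrier R" "x \<in> carrier M" "y \<in> carrier M"
  shows "t \<odot>\<^bsub>M\<^esub> (a \<odot>\<^bsub>M\<^esub> x \<ominus>\<^bsub>M\<^esub> b \<odot>\<^bsub>M\<^esub> y) = (t \<otimes> a) \<odot>\<^bsub>M\<^esub> x \<ominus>\<^bsub>M\<^esub> (t \<otimes> b) \<odot>\<^bsub>M\<^esub> y"
  using assms by (simp add: a_minus_def smult_r_distr smult_r_minus smult_assoc1)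

lemma (in module) ex_annihilator_cross_difference_iff:
  assumes S: "submonoid S R" and t0: "t0 \<in> S" "t0 \<odot>\<^bsub>M\<^esub> m = \<zero>\<^bsub>M\<^esub>"
    and m: "m \<in> carrier M" "m' \<in> carrier M" and s: "s \<in> S" "s' \<in> S"
  shows "(\<exists>t \<in> S. t \<odot>\<^bsub>M\<^esub> (s' \<odot>\<^bsub>M\<^esub> m \<ominus>\<^bsub>M\<^esub> s \<odot>\<^bsub>M\<^esub> m') = \<zero>\<^bsub>M\<^esub>)
    \<longleftrightarrow> (\<exists>t \<in> S. t \<odot>\<^bsub>M\<^esub> m' = \<zero>\<^bsub>M\<^esub>)"
proof -
  interpret submonoid S R by fact
  have Sc: "t \<in> S \<Longrightarrow> t \<in> carrier R" for t
    using subset by blast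
  have cross: "(t0 \<otimes> t) \<odot>\<^bsub>M\<^esub> (s' \<odot>\<^bsub>M\<^esub> m \<ominus>\<^bsub>M\<^esub> s \<odot>\<^bsub>M\<^esub> m') = \<ominus>\<^bsub>M\<^esub> ((t0 \<otimes> t \<otimes> s) \<odot>\<^bsub>M\<^esub> m')"
    if t: "t \<in> S" for t
  proof -
    have "(t0 \<otimes> t \<otimes> s') \<odot>\<^bsub>M\<^esub> m = (t \<otimes> s') \<odot>\<^bsub>M\<^esub> (t0 \<odot>\<^bsub>M\<^esub> m)"
      using t t0(1) Sc s m by (simp add: smult_assoc1[symmetric] m_ac)
    then have "(t0 \<otimes> t \<otimes> s') \<odot>\<^bsub>M\<^esub> m = \<zero>\<^bsub>M\<^esub>"
      using t t0 Sc s by simp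
    then show ?thesis
      using t t0 Sc s m by (simp add: smult_minus_smult) (simp add: a_minus_def)
  qed
  show ?thesis
  proof
    assume "\<exists>t \<in> S. t \<odot>\<^bsub>M\<^esub> (s' \<odot>\<^bsub>M\<^esub> m \<ominus>\<^bsub>M\<^esub> s \<odot>\<^bsub>M\<^esub> m') = \<zero>\<^bsub>M\<^esub>"
    then obtain t where t: "t \<in> S" and "t \<odot>\<^bsub>M\<^esub> (s' \<odot>\<^bsub>M\<^esub> m \<ominus>\<^bsub>M\<^esub> s \<odot>\<^bsub>M\<^esub> m') = \<zero>\<^bsub>M\<^esub>"
      by blast
    then have "(t0 \<otimes> t) \<odot>\<^bsub>M\<^esub> (s' \<odot>\<^bsub>M\<^esub> m \<ominus>\<^bsub>M\<^esub> s \<odot>\<^bsub>M\<^esub> m') = \<zero>\<^bsub>M\<^esub>"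
      using t t0 Sc s m by (simp add: smult_assoc1)
    then have "(t0 \<otimes> t \<otimes> s) \<odot>\<^bsub>M\<^esub> m' = \<zero>\<^bsub>M\<^esub>"
      using cross[OF t] t t0 Sc s m by (simp add: add.inv_eq_1_iff)
    then show "\<exists>t \<in> S. t \<odot>\<^bsub>M\<^esub> m' = \<zero>\<^bsub>M\<^esub>"
      using t t0 s by blast
  next
    assume "\<exists>t \<in> S. t \<odot>\<^bsub>M\<^esub> m' = \<zero>\<^bsub>M\<^esub>"
    then obtain t where t: "t \<in> S" and tm': "t \<odot>\<^bsub>M\<^esub> m' = \<zero>\<^bsub>M\<^esub>"
      by blast
    have "(t0 \<otimes> t \<otimes> s) \<odot>\<^bsub>M\<^esub> m' = (t0 \<otimes> s) \<odot>\<^bsub>M\<^esub> (t \<odot>\<^bsub>M\<^esub> m')"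
      using t t0(1) Sc s m by (simp add: smult_assoc1[symmetric] m_ac)
    then have "(t0 \<otimes> t \<otimes> s) \<odot>\<^bsub>M\<^esub> m' = \<zero>\<^bsub>M\<^esub>"
      using tm' t0(1) Sc s by simp
    then have "(t0 \<otimes> t) \<odot>\<^bsub>M\<^esub> (s' \<odot>\<^bsub>M\<^esub> m \<ominus>\<^bsub>M\<^esub> s \<odot>\<^bsub>M\<^esub> m') = \<zero>\<^bsub>M\<^esub>"
      using cross[OF t] by simp
    then show "\<exists>t \<in> S. t \<odot>\<^bsub>M\<^esub> (s' \<odot>\<^bsub>M\<^esub> m \<ominus>\<^bsub>M\<^esub> s \<odot>\<^bsub>M\<^esub> m') = \<zero>\<^bsub>M\<^esub>"
      using t t0 by blast
  qed
qed

lemma loc_class_eq_zero_iff: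
  fixes R (structure)
  assumes "module R M" and S: "submonoid S R" and m: "m \<in> carrier M" and s: "s \<in> S"
  shows "loc_class R M S m s = loc_class R M S \<zero>\<^bsub>M\<^esub> \<one> \<longleftrightarrow> (\<exists>t \<in> S. t \<odot>\<^bsub>M\<^esub> m = \<zero>\<^bsub>M\<^esub>)"
proof -
  interpret module R M by fact
  have Sc: "t \<in> S \<Longrightarrow> t \<in> carrier R" for t
    using submonoid.subset[OF S] by blast
  have mem_zero: "(m', s') \<in> loc_class R M S \<zero>\<^bsub>M\<^esub> \<one> \<longleftrightarrow>
      m' \<in> carrier M \<and> s' \<in> S \<and> (\<exists>t \<in> S. t \<odot>\<^bsub>M\<^esub> m' = \<zero>\<^bsub>M\<^esub>)" for m' s'
    using submonoid.one_closed[OF S] by (auto simp: mem_loc_class_iff a_minus_def smult_r_minus Sc)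
  show ?thesis
  proof
    have "(m, s) \<in> loc_class R M S m s"
      using m s Sc by (auto simp: mem_loc_class_iff a_minus_def r_neg intro!: bexI[of _ \<one>])
    moreover assume "loc_class R M S m s = loc_class R M S \<zero>\<^bsub>M\<^esub> \<one>"
    ultimately show "\<exists>t \<in> S. t \<odot>\<^bsub>M\<^esub> m = \<zero>\<^bsub>M\<^esub>"
      using mem_zero by blast
  next
    assume "\<exists>t \<in> S. t \<odot>\<^bsub>M\<^esub> m = \<zero>\<^bsub>M\<^esub>"
    then obtain t0 where t0: "t0 \<in> S" "t0 \<odot>\<^bsub>M\<^esub> m = \<zero>\<^bsub>M\<^esub>"
      by blast
    have "(m', s') \<in> loc_class R M S m s \<longleftrightarrow> (m', s') \<in> loc_class R M S \<zero>\<^bsub>M\<^esub> \<one>" for m' s'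
    proof (cases "m' \<in> carrier M \<and> s' \<in> S")
      case True
      then show ?thesis
        using ex_annihilator_cross_difference_iff[OF S t0 m _ s, of m' s']
        unfolding mem_zero by (simp add: mem_loc_class_iff m s)
    qed (auto simp: mem_loc_class_iff)
    then show "loc_class R M S m s = loc_class R M S \<zero>\<^bsub>M\<^esub> \<one>"
      by (simp add: set_eq_iff)
  qed
qed

lemma loc_deg_zero_eq_trivial_iff:
  fixes R (structure)
  assumes gm: "graded_module R Rg M Mg" and S: "submonoid S R"
  shows "loc_deg R Rg M Mg S 0 = {loc_class R M S \<zero>\<^bsub>M\<^esub> \<one>} \<longleftrightarrow>
    (\<forall>n m s. m \<in> Mg n \<longrightarrow> s \<in> S \<longrightarrow> s \<in> Rg n \<longrightarrow> (\<exists>t \<in> S. t \<odot>\<^bsub>M\<^esub> m = \<zero>\<^bsub>M\<^esub>))"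
proof -
  interpret G: graded_abelian_group M Mg
    using graded_module_graded_abelian_group[OF gm] .
  have gr: "graded_ring R Rg" and M: "module R M"
    using gm by (simp_all add: graded_module_def)
  have "loc_class R M S \<zero>\<^bsub>M\<^esub> \<one> \<in> loc_deg R Rg M Mg S 0"
    unfolding loc_deg_def
    using G.zero_in_grade[of 0] graded_ring_one_homogeneous[OF gr] submonoid.one_closed[OF S]
    by (intro CollectI exI[of _ "\<zero>\<^bsub>M\<^esub>"] exI[of _ \<one>] exI[of _ "0::int"]) simp
  then have "loc_deg R Rg M Mg S 0 = {loc_class R M S \<zero>\<^bsub>M\<^esub> \<one>} \<longleftrightarrow>
      (\<forall>c \<in> loc_deg R Rg M Mg S 0. c = loc_class R M S \<zero>\<^bsub>M\<^esub> \<one>)"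
    by blast
  also have "\<dots> \<longleftrightarrow> (\<forall>n m s. m \<in> Mg n \<longrightarrow> s \<in> S \<longrightarrow> s \<in> Rg n \<longrightarrow>
        loc_class R M S m s = loc_class R M S \<zero>\<^bsub>M\<^esub> \<one>)"
    unfolding loc_deg_def by auto
  also have "\<dots> \<longleftrightarrow> (\<forall>n m s. m \<in> Mg n \<longrightarrow> s \<in> S \<longrightarrow> s \<in> Rg n \<longrightarrow> (\<exists>t \<in> S. t \<odot>\<^bsub>M\<^esub> m = \<zero>\<^bsub>M\<^esub>))"
    using loc_class_eq_zero_iff[OF M S G.grade_closed] by simp
  finally show ?thesis .
qed

section \<open>Graded morphisms into the envelope of \<open>R/P\<close>\<close>

lemma gr_injective_extend:
  fixes M :: "('r, 'm) module"
  assumes inj: "gr_injective TYPE('m) R Rg E Eg" and gm: "graded_module R Rg M Mg"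
    and sub: "submodule H R M" and graded: "graded_subset M Mg H"
    and g: "gr_hom R (M\<lparr>carrier := H\<rparr>) (\<lambda>n. H \<inter> Mg n) E Eg g"
  obtains h where "gr_hom R M Mg E Eg h" and "\<And>x. x \<in> H \<Longrightarrow> h x = g x"
proof -
  have "H \<subseteq> carrier M"
    using module.submoduleE(1)[OF _ sub] gm by (simp add: graded_module_def)
  then have "gr_hom R (M\<lparr>carrier := H\<rparr>) (\<lambda>n. H \<inter> Mg n) M Mg id"
    by (auto simp: gr_hom_def)
  moreover have "graded_module R Rg (M\<lparr>carrier := H\<rparr>) (\<lambda>n. H \<inter> Mg n) \<and> graded_module R Rg M Mg
      \<and> gr_hom R (M\<lparr>carrier := H\<rparr>) (\<lambda>n. H \<inter> Mg n) M Mg id \<and> inj_on id (carrier (M\<lparr>carrier := H\<rparr>))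
      \<and> gr_hom R (M\<lparr>carrier := H\<rparr>) (\<lambda>n. H \<inter> Mg n) E Eg g
      \<longrightarrow> (\<exists>h. gr_hom R M Mg E Eg h \<and> (\<forall>x \<in> carrier (M\<lparr>carrier := H\<rparr>). h (id x) = g x))"
    using conjunct2[OF inj[unfolded gr_injective_def]] by (elim allE)
  ultimately show ?thesis
    using graded_submodule_graded_module[OF gm sub graded] gm g that by auto
qed

locale graded_prime_embedding =
  fixes R :: "'r ring" (structure) and Rg :: "int \<Rightarrow> 'r set" and P :: "'r set"
    and E :: "('r, 'e) module" and Eg :: "int \<Rightarrow> 'e set" and i :: "'r set \<Rightarrow> 'e"
  assumes graded_ring: "graded_ring R Rg"
    and prime: "primeideal P R"
    and graded_module: "graded_module R Rg E Eg"
    and i_gr_hom: "gr_hom R (quot_module R P) (quot_grading R Rg P) E Eg i"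
    and i_inj: "inj_on i (carrier (quot_module R P))"
begin

sublocale primeideal P R
  by (rule prime)

sublocale E: module R E
  using graded_module by (simp add: graded_module_def)

sublocale RG: graded_abelian_group R Rg
  using graded_ring_graded_abelian_group[OF graded_ring] .

sublocale EG: graded_abelian_group E Eg
  using graded_module_graded_abelian_group[OF graded_module] .

definition \<phi> :: "'r \<Rightarrow> 'e"
  where "\<phi> a = i (P +>\<^bsub>R\<^esub> a)"

lemma quot_module_simps:
  "carrier (quot_module R P) = a_rcosets P"
  "add (quot_module R P) = set_add R"
  "smult (quot_module R P) = (\<lambda>r Y. rcoset_mult R P (P +>\<^bsub>R\<^esub> r) Y)"
  by (simp_all add: quot_module_def FactRing_def a_r_coset_def)

lemma coset_in_quot_module: "a \<in> carrier R \<Longrightarrow> P +>\<^bsub>R\<^esub> a \<in> carrier (quot_module R P)"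
  by (simp add: quot_module_simps a_rcosetsI a_subset)

lemma image_i_eq: "i ` carrier (quot_module R P) = \<phi> ` carrier R"
proof -
  have "a_rcosets P = (\<lambda>a. P +>\<^bsub>R\<^esub> a) ` carrier R"
    unfolding A_RCOSETS_def a_r_coset_def RCOSETS_def by auto
  then show ?thesis
    by (simp add: quot_module_simps \<phi>_def image_image)
qed

lemma \<phi>_closed: "a \<in> carrier R \<Longrightarrow> \<phi> a \<in> carrier E"
  unfolding \<phi>_def using gr_hom_closed[OF i_gr_hom] coset_in_quot_module by blast

lemma \<phi>_add: "a \<in> carrier R \<Longrightarrow> b \<in> carrier R \<Longrightarrow> \<phi> (a \<oplus> b) = \<phi> a \<oplus>\<^bsub>E\<^esub> \<phi> b"
  using gr_hom_add[OF i_gr_hom coset_in_quot_module coset_in_quot_module]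
  by (simp add: \<phi>_def quot_module_simps a_rcos_sum)

lemma \<phi>_mult: "a \<in> carrier R \<Longrightarrow> b \<in> carrier R \<Longrightarrow> \<phi> (a \<otimes> b) = a \<odot>\<^bsub>E\<^esub> \<phi> b"
  using gr_hom_smult[OF i_gr_hom _ coset_in_quot_module]
  by (simp add: \<phi>_def quot_module_simps rcoset_mult_add)

lemma \<phi>_grade: "a \<in> Rg n \<Longrightarrow> \<phi> a \<in> Eg n"
  using gr_hom_grade[OF i_gr_hom] by (auto simp: \<phi>_def quot_grading_def)

lemma abelian_group_hom_\<phi>: "abelian_group_hom R E \<phi>"
  using abelian_group.a_group[OF is_abelian_group] E.a_group
  by (intro abelian_group_homI is_abelian_group E.abelian_group_axioms)
    (auto simp: group_hom_def group_hom_axioms_def hom_def \<phi>_closed \<phi>_add)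

lemma \<phi>_zero: "\<phi> \<zero> = \<zero>\<^bsub>E\<^esub>"
  using abelian_group_hom.hom_zero[OF abelian_group_hom_\<phi>] .

lemma \<phi>_eq_zero_iff: "a \<in> carrier R \<Longrightarrow> \<phi> a = \<zero>\<^bsub>E\<^esub> \<longleftrightarrow> a \<in> P"
proof -
  assume a: "a \<in> carrier R"
  have "\<phi> a = \<phi> \<zero> \<longleftrightarrow> P +>\<^bsub>R\<^esub> a = P +>\<^bsub>R\<^esub> \<zero>"
    using inj_on_eq_iff[OF i_inj coset_in_quot_module[OF a] coset_in_quot_module[OF zero_closed]]
    by (simp add: \<phi>_def)
  moreover have "P +>\<^bsub>R\<^esub> \<zero> = P"
    by (simp add: a_rcos_const)
  ultimately show ?thesis
    using a \<phi>_zero a_rcos_self a_rcos_const by metis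
qed

lemma \<phi>_homogeneous_component:
  "a \<in> carrier R \<Longrightarrow> \<phi> (homogeneous_component R Rg a n) = homogeneous_component E Eg (\<phi> a) n"
  using \<phi>_grade
  by (intro homogeneous_component_hom[OF RG.graded_abelian_group_axioms EG.graded_abelian_group_axioms
        abelian_group_hom_\<phi>]) auto

lemma homogeneous_multiple_in_image:
  assumes ess: "gr_essential R E Eg (i ` carrier (quot_module R P))"
    and v: "v \<in> Eg j" "v \<noteq> \<zero>\<^bsub>E\<^esub>"
  obtains b a k where "b \<in> Rg (k - j)" and "a \<in> Rg k" and "a \<notin> P" and "b \<odot>\<^bsub>E\<^esub> v = \<phi> a"
proof -
  let ?H = "cyclic_submodule R E v"
  have vc: "v \<in> carrier E"
    using EG.grade_closed[OF v(1)] .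
  have "v \<in> ?H"
    using vc by (auto simp: cyclic_submodule_def intro!: exI[of _ \<one>])
  then have "?H \<inter> \<phi> ` carrier R \<noteq> {\<zero>\<^bsub>E\<^esub>}"
    using ess E.submodule_cyclic_submodule[OF vc] graded_subset_cyclic_submodule[OF graded_module v(1)] v(2)
    unfolding gr_essential_def image_i_eq by blast
  moreover have "\<zero>\<^bsub>E\<^esub> \<in> ?H \<inter> \<phi> ` carrier R"
    using \<phi>_zero vc by (auto simp: cyclic_submodule_def intro!: exI[of _ \<zero>] image_eqI[of _ _ \<zero>])
  ultimately obtain y where "y \<in> ?H" "y \<in> \<phi> ` carrier R" "y \<noteq> \<zero>\<^bsub>E\<^esub>"
    by blast
  then obtain r a0 where r: "r \<in> carrier R" and a0: "a0 \<in> carrier R"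
    and y: "r \<odot>\<^bsub>E\<^esub> v = \<phi> a0" and y0: "\<phi> a0 \<noteq> \<zero>\<^bsub>E\<^esub>"
    by (auto simp: cyclic_submodule_def)
  obtain k where k: "homogeneous_component E Eg (\<phi> a0) k \<noteq> \<zero>\<^bsub>E\<^esub>"
    using EG.ex_homogeneous_component_nonzero[OF \<phi>_closed[OF a0] y0] .
  \<comment> \<open>Compare the degree \<open>k\<close> components of both sides of \<open>r \<odot> v = \<phi> a0\<close>.\<close>
  have "homogeneous_component R Rg r (k - j) \<odot>\<^bsub>E\<^esub> v = \<phi> (homogeneous_component R Rg a0 k)"
    using graded_module_homogeneous_component_smult[OF graded_module r v(1), of k]
      \<phi>_homogeneous_component[OF a0] y by simp
  moreover have "homogeneous_component R Rg a0 k \<notin> P"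
    using k \<phi>_eq_zero_iff[OF RG.homogeneous_component_closed[OF a0]] \<phi>_homogeneous_component[OF a0]
    by metis
  ultimately show ?thesis
    using that RG.homogeneous_component_in_grade r a0 by blast
qed

lemma gr_hom_vanishes_if_torsion:
  assumes ess: "gr_essential R E Eg (i ` carrier (quot_module R P))"
    and gm: "graded_module R Rg M Mg"
    and torsion: "\<And>n m s. m \<in> Mg n \<Longrightarrow> s \<in> hS R Rg P \<Longrightarrow> s \<in> Rg n
      \<Longrightarrow> \<exists>t \<in> hS R Rg P. t \<odot>\<^bsub>M\<^esub> m = \<zero>\<^bsub>M\<^esub>"
    and f: "gr_hom R M Mg E Eg f" and x: "x \<in> carrier M"
  shows "f x = \<zero>\<^bsub>E\<^esub>"
proof (rule ccontr)
  interpret M: module R M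
    using gm by (simp add: graded_module_def)
  interpret MG: graded_abelian_group M Mg
    using graded_module_graded_abelian_group[OF gm] .
  assume "f x \<noteq> \<zero>\<^bsub>E\<^esub>"
  then obtain j where "homogeneous_component E Eg (f x) j \<noteq> \<zero>\<^bsub>E\<^esub>"
    using EG.ex_homogeneous_component_nonzero gr_hom_closed[OF f x] by blast
  moreover define w where "w = homogeneous_component M Mg x j"
  ultimately have w: "w \<in> Mg j" and fw: "f w \<noteq> \<zero>\<^bsub>E\<^esub>"
    using MG.homogeneous_component_in_grade[OF x] gr_hom_homogeneous_component[OF gm graded_module f x]
    by auto
  obtain b a k where b: "b \<in> Rg (k - j)" and a: "a \<in> Rg k" "a \<notin> P"
    and ba: "b \<odot>\<^bsub>E\<^esub> f w = \<phi> a"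
    using homogeneous_multiple_in_image[OF ess gr_hom_grade[OF f w] fw] .
  have "b \<odot>\<^bsub>M\<^esub> w \<in> Mg k"
    using graded_module_smult_homogeneous[OF gm b w] by simp
  moreover have "a \<in> hS R Rg P"
    using a RG.grade_closed by (auto simp: hS_def homogeneous_def)
  ultimately obtain t where t: "t \<in> hS R Rg P" and tbw: "t \<odot>\<^bsub>M\<^esub> (b \<odot>\<^bsub>M\<^esub> w) = \<zero>\<^bsub>M\<^esub>"
    using torsion a by blast
  have tc: "t \<in> carrier R" and bc: "b \<in> carrier R" and ac: "a \<in> carrier R" and wc: "w \<in> carrier M"
    using t b a w RG.grade_closed MG.grade_closed by (auto simp: hS_def)
  have "\<phi> (t \<otimes> a) = t \<odot>\<^bsub>E\<^esub> (b \<odot>\<^bsub>E\<^esub> f w)"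
    using \<phi>_mult[OF tc ac] ba by simp
  also have "\<dots> = f (t \<odot>\<^bsub>M\<^esub> (b \<odot>\<^bsub>M\<^esub> w))"
    using gr_hom_smult[OF f] tc bc wc by simp
  also have "\<dots> = \<zero>\<^bsub>E\<^esub>"
    using tbw abelian_group_hom.hom_zero[OF gr_hom_abelian_group_hom[OF M.module_axioms E.module_axioms f]]
    by simp
  finally have "t \<otimes> a \<in> P"
    using \<phi>_eq_zero_iff tc ac by simp
  then show False
    using I_prime[OF tc ac] a(2) t by (auto simp: hS_def)
qed

lemma \<phi>_mult_eq_if_smult_eq:
  assumes gm: "graded_module R Rg M Mg" and m: "m \<in> Mg n"
    and not_torsion: "\<And>t. t \<in> hS R Rg P \<Longrightarrow> t \<odot>\<^bsub>M\<^esub> m \<noteq> \<zero>\<^bsub>M\<^esub>"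
    and r: "r \<in> carrier R" "r' \<in> carrier R" and eq: "r \<odot>\<^bsub>M\<^esub> m = r' \<odot>\<^bsub>M\<^esub> m"
    and s: "s \<in> carrier R"
  shows "\<phi> (r \<otimes> s) = \<phi> (r' \<otimes> s)"
proof -
  interpret M: module R M
    using gm by (simp add: graded_module_def)
  have "m \<in> carrier M"
    using graded_abelian_group.grade_closed[OF graded_module_graded_abelian_group[OF gm] m] .
  then have "(r \<ominus> r') \<odot>\<^bsub>M\<^esub> m = \<zero>\<^bsub>M\<^esub>"
    using r eq by (simp add: a_minus_def M.smult_l_distr M.smult_l_minus M.r_neg)
  then have "r \<ominus> r' \<in> P"
    using annihilator_of_homogeneous_subset_prime[OF gm prime m not_torsion] r by simp
  then have "\<phi> ((r \<ominus> r') \<otimes> s) = \<zero>\<^bsub>E\<^esub>"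
    using \<phi>_eq_zero_iff r s I_r_closed by simp
  moreover have "r \<otimes> s = (r \<ominus> r') \<otimes> s \<oplus> r' \<otimes> s"
    using r s by algebra
  ultimately show ?thesis
    using \<phi>_add \<phi>_closed r s by simp
qed

lemma gr_hom_on_cyclic_submodule:
  assumes gm: "graded_module R Rg M Mg" and m: "m \<in> Mg n"
    and s: "s \<in> hS R Rg P" "s \<in> Rg n"
    and not_torsion: "\<And>t. t \<in> hS R Rg P \<Longrightarrow> t \<odot>\<^bsub>M\<^esub> m \<noteq> \<zero>\<^bsub>M\<^esub>"
  obtains g where "gr_hom R (M\<lparr>carrier := cyclic_submodule R M m\<rparr>)
      (\<lambda>k. cyclic_submodule R M m \<inter> Mg k) E Eg g"
    and "\<And>r. r \<in> carrier R \<Longrightarrow> g (r \<odot>\<^bsub>M\<^esub> m) = \<phi> (r \<otimes> s)"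
proof -
  interpret M: module R M
    using gm by (simp add: graded_module_def)
  interpret MG: graded_abelian_group M Mg
    using graded_module_graded_abelian_group[OF gm] .
  let ?C = "cyclic_submodule R M m"
  have mc: "m \<in> carrier M" and sc: "s \<in> carrier R"
    using MG.grade_closed[OF m] s by (auto simp: hS_def)
  define g where "g y = \<phi> ((SOME r. r \<in> carrier R \<and> y = r \<odot>\<^bsub>M\<^esub> m) \<otimes> s)" for y
  have g: "g (r \<odot>\<^bsub>M\<^esub> m) = \<phi> (r \<otimes> s)" if r: "r \<in> carrier R" for r
  proof -
    have "\<exists>r'. r' \<in> carrier R \<and> r \<odot>\<^bsub>M\<^esub> m = r' \<odot>\<^bsub>M\<^esub> m"
      using r by blast
    then show ?thesis
      unfolding g_def using \<phi>_mult_eq_if_smult_eq[OF gm m not_torsion _ _ _ sc] r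
      by (metis (mono_tags, lifting) someI_ex)
  qed
  have "gr_hom R (M\<lparr>carrier := ?C\<rparr>) (\<lambda>k. ?C \<inter> Mg k) E Eg g"
    unfolding gr_hom_def
  proof (intro conjI ballI allI subsetI)
    show "g \<in> carrier (M\<lparr>carrier := ?C\<rparr>) \<rightarrow> carrier E"
      using g \<phi>_closed sc by (auto simp: cyclic_submodule_def)
  next
    fix x y
    assume "x \<in> carrier (M\<lparr>carrier := ?C\<rparr>)" "y \<in> carrier (M\<lparr>carrier := ?C\<rparr>)"
    then obtain a b where ab: "a \<in> carrier R" "b \<in> carrier R" and "x = a \<odot>\<^bsub>M\<^esub> m" "y = b \<odot>\<^bsub>M\<^esub> m"
      by (auto simp: cyclic_submodule_def)
    then show "g (x \<oplus>\<^bsub>M\<lparr>carrier := ?C\<rparr>\<^esub> y) = g x \<oplus>\<^bsub>E\<^esub> g y"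
      using mc sc g \<phi>_add by (simp add: M.smult_l_distr[symmetric] l_distr)
  next
    fix a x
    assume "a \<in> carrier R" "x \<in> carrier (M\<lparr>carrier := ?C\<rparr>)"
    then obtain b where "a \<in> carrier R" "b \<in> carrier R" and "x = b \<odot>\<^bsub>M\<^esub> m"
      by (auto simp: cyclic_submodule_def)
    then show "g (a \<odot>\<^bsub>M\<lparr>carrier := ?C\<rparr>\<^esub> x) = a \<odot>\<^bsub>E\<^esub> g x"
      using mc sc g \<phi>_mult \<phi>_closed by (simp add: M.smult_assoc1[symmetric] E.smult_assoc1)
  next
    fix k y
    assume "y \<in> g ` (?C \<inter> Mg k)"
    then obtain x where "x \<in> ?C" "x \<in> Mg k" and y: "y = g x"
      by blast
    then obtain b where b: "b \<in> Rg (k - n)" and "x = b \<odot>\<^bsub>M\<^esub> m"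
      using homogeneous_in_cyclic_submodule[OF gm m] by metis
    then have "y = \<phi> (b \<otimes> s)"
      using y g RG.grade_closed by blast
    then show "y \<in> Eg k"
      using \<phi>_grade graded_ring_mult_homogeneous[OF graded_ring b s(2)] by simp
  qed
  then show ?thesis
    using that g by blast
qed

lemma ex_gr_hom_nonvanishing:
  fixes M :: "('r, 'm) module"
  assumes inj: "gr_injective TYPE('m) R Rg E Eg" and gm: "graded_module R Rg M Mg" and m: "m \<in> Mg n"
    and s: "s \<in> hS R Rg P" "s \<in> Rg n"
    and not_torsion: "\<And>t. t \<in> hS R Rg P \<Longrightarrow> t \<odot>\<^bsub>M\<^esub> m \<noteq> \<zero>\<^bsub>M\<^esub>"
  obtains h where "gr_hom R M Mg E Eg h" and "h m \<noteq> \<zero>\<^bsub>E\<^esub>"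
proof -
  interpret M: module R M
    using gm by (simp add: graded_module_def)
  have mc: "m \<in> carrier M" and sc: "s \<in> carrier R"
    using graded_abelian_group.grade_closed[OF graded_module_graded_abelian_group[OF gm] m] s
    by (auto simp: hS_def)
  obtain g where g: "gr_hom R (M\<lparr>carrier := cyclic_submodule R M m\<rparr>)
      (\<lambda>k. cyclic_submodule R M m \<inter> Mg k) E Eg g"
    and g_eq: "\<And>r. r \<in> carrier R \<Longrightarrow> g (r \<odot>\<^bsub>M\<^esub> m) = \<phi> (r \<otimes> s)"
    using gr_hom_on_cyclic_submodule[OF gm m s not_torsion] by blast
  obtain h where h: "gr_hom R M Mg E Eg h" and hg: "\<And>x. x \<in> cyclic_submodule R M m \<Longrightarrow> h x = g x"
    using gr_injective_extend[OF inj gm M.submodule_cyclic_submodule[OF mc]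
        graded_subset_cyclic_submodule[OF gm m] g] by blast
  have "m \<in> cyclic_submodule R M m"
    using mc by (auto simp: cyclic_submodule_def intro!: exI[of _ \<one>])
  then have "h m = \<phi> s"
    using hg g_eq[of \<one>] mc sc by simp
  moreover have "\<phi> s \<noteq> \<zero>\<^bsub>E\<^esub>"
    using \<phi>_eq_zero_iff sc s by (simp add: hS_def)
  ultimately show ?thesis
    using that h by simp
qed

end

theorem mainTheorem8:
  fixes R :: "'r ring" and Rg :: "int \<Rightarrow> 'r set" and P :: "'r set"
    and M :: "('r, 'm) module" and Mg :: "int \<Rightarrow> 'm set"
    and E :: "('r, 'e) module" and Eg :: "int \<Rightarrow> 'e set" and i :: "'r set \<Rightarrow> 'e"
  assumes "graded_ring R Rg"
    and "primeideal P R" and "graded_subset R Rg P"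
    and "graded_module R Rg M Mg"
    and "gr_injective_envelope TYPE('m) R Rg (quot_module R P) (quot_grading R Rg P) E Eg i"
  shows "loc_deg R Rg M Mg (hS R Rg P) 0 = {loc_class R M (hS R Rg P) \<zero>\<^bsub>M\<^esub> \<one>\<^bsub>R\<^esub>}
     \<longleftrightarrow> (\<forall>f. gr_hom R M Mg E Eg f \<longrightarrow> (\<forall>x \<in> carrier M. f x = \<zero>\<^bsub>E\<^esub>))"
proof -
  have inj: "gr_injective TYPE('m) R Rg E Eg"
    and ess: "gr_essential R E Eg (i ` carrier (quot_module R P))"
    using assms(5) by (simp_all add: gr_injective_envelope_def)
  interpret graded_prime_embedding R Rg P E Eg i
    using assms(1,2,5) inj
    by (intro graded_prime_embedding.intro) (simp_all add: gr_injective_envelope_def gr_injective_def)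
  show ?thesis
    unfolding loc_deg_zero_eq_trivial_iff[OF assms(4) submonoid_hS[OF assms(1,2)]]
  proof
    assume "\<forall>n m s. m \<in> Mg n \<longrightarrow> s \<in> hS R Rg P \<longrightarrow> s \<in> Rg n
      \<longrightarrow> (\<exists>t \<in> hS R Rg P. t \<odot>\<^bsub>M\<^esub> m = \<zero>\<^bsub>M\<^esub>)"
    then show "\<forall>f. gr_hom R M Mg E Eg f \<longrightarrow> (\<forall>x \<in> carrier M. f x = \<zero>\<^bsub>E\<^esub>)"
      using gr_hom_vanishes_if_torsion[OF ess assms(4)] by blast
  next
    assume "\<forall>f. gr_hom R M Mg E Eg f \<longrightarrow> (\<forall>x \<in> carrier M. f x = \<zero>\<^bsub>E\<^esub>)"
    then show "\<forall>n m s. m \<in> Mg n \<longrightarrow> s \<in> hS R Rg P \<longrightarrow> s \<in> Rg n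
      \<longrightarrow> (\<exists>t \<in> hS R Rg P. t \<odot>\<^bsub>M\<^esub> m = \<zero>\<^bsub>M\<^esub>)"
      using ex_gr_hom_nonvanishing[OF inj assms(4)]
        graded_abelian_group.grade_closed[OF graded_module_graded_abelian_group[OF assms(4)]]
      by metis
  qed
qed

end
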